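(* Let $K\subset\mathbb{R}^n$ be a $0$-symmetric convex body, and let $a_1,\dots,a_n\in\mathbb{Z}^n$ be linearly independent with $a_j\in\lambda_j(K)K$ for $1\le j\le n$. Let $i\in\{1,\dots,n-1\}$, let $\overline{L}$ be an $i$-dimensional linear subspace of $\mathbb{R}^n$ containing $i$ linearly independent points of $\mathbb{Z}^n$, and let $j_1,\dots,j_{n-i}$ be distinct indices in $\{1,\dots,n\}$ with $\mathrm{lin}\{a_{j_1},\dots,a_{j_{n-i}}\}\cap\overline{L}=\{0\}$. Then $$\prod_{j=1}^i\lambda_j(K\cap\overline{L},\mathbb{Z}^n\cap\overline{L})\geq\prod_{k\in\{1,\dots,n\}\setminus\{j_1,\dots,j_{n-i}\}}\lambda_k(K).$$
   Context: A $0$-symmetric convex body is a compact convex set $K=-K$ with nonempty interior. $\lambda_j(K)=\min\{\lambda>0:\dim(\lambda K\cap\mathbb{Z}^n)\ge j\}$ ($\dim$ = dimension of affine hull). Analogously, for the $i$-dimensional body $K\cap\overline{L}$ in the space $\overline{L}$ with lattice $\mathbb{Z}^n\cap\overline{L}$, $\lambda_j(K\cap\overline{L},\mathbb{Z}^n\cap\overline{L})=\min\{\lambda>0:\dim(\lambda (K\cap\overline{L})\cap\mathbb{Z}^n)\ge j\}$, $1\le j\le i$. *)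

theory Defs
  imports "HOL-Analysis.Analysis"
begin

definition int_lattice :: "(real ^ 'n) set" where
  "int_lattice = {x. \<forall>k. x $ k \<in> \<int>}"

definition sym_convex_body :: "(real ^ 'n) set \<Rightarrow> bool" where
  "sym_convex_body K \<longleftrightarrow> compact K \<and> convex K \<and> uminus ` K = K \<and> interior K \<noteq> {}"

text \<open>The minimum is written as an infimum (it is attained for the cases considered).\<close>
definition succ_min :: "(real ^ 'n) set \<Rightarrow> (real ^ 'n) set \<Rightarrow> nat \<Rightarrow> real" where
  "succ_min C Lam j = Inf {lam. lam > 0 \<and> aff_dim (((\<lambda>x. lam *\<^sub>R x) ` C) \<inter> Lam) \<ge> int j}"

end

theory Submission
  imports Defs
begin

text \<open>Let \<open>k\<^sub>1 < \<dots> < k\<^sub>i\<close> enumerate the indices outside \<open>J\<close>; it suffices to show that the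
  \<open>l\<close>-th successive minimum of the section \<open>K \<inter> L\<close> is at least \<open>\<lambda>\<^bsub>k\<^sub>l\<^esub>(K)\<close>. Every lattice
  point of \<open>\<mu>K\<close> lies in the span of the \<open>a\<^sub>j\<close> with \<open>\<lambda>\<^sub>j(K) \<le> \<mu>\<close>: otherwise it would extend
  them to more independent lattice points in \<open>\<mu>K\<close> than the minima allow. So for \<open>\<mu> < \<lambda>\<^bsub>k\<^sub>l\<^esub>(K)\<close>
  the lattice points of \<open>\<mu>(K \<inter> L)\<close> lie in \<open>span {a\<^sub>1, \<dots>, a\<^bsub>k\<^sub>l - 1\<^esub>} \<inter> L\<close>, and this space has
  dimension below \<open>l\<close>, because the span also contains the \<open>(k\<^sub>l - l)\<close>-dimensional span of the
  \<open>a\<^sub>j\<close> with \<open>j \<in> J\<close>, \<open>j < k\<^sub>l\<close>, which meets \<open>L\<close> only in \<open>0\<close>.\<close>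

lemma zero_in_int_lattice [simp]: "0 \<in> int_lattice"
  by (simp add: int_lattice_def)

lemma scaled_convex_mono:
  fixes K :: "'a::real_vector set"
  assumes "convex K" "0 \<in> K" "0 \<le> t" "t \<le> s" "0 < s"
  shows "(\<lambda>x. t *\<^sub>R x) ` K \<subseteq> (\<lambda>x. s *\<^sub>R x) ` K"
proof
  fix z assume "z \<in> (\<lambda>x. t *\<^sub>R x) ` K"
  then obtain y where y: "y \<in> K" "z = t *\<^sub>R y" by auto
  have "(1 - t/s) *\<^sub>R 0 + (t/s) *\<^sub>R y \<in> K"
    using convexD[OF assms(1) assms(2) y(1), of "1 - t/s" "t/s"] assms by auto
  then have "(t/s) *\<^sub>R y \<in> K" by simp
  moreover have "z = s *\<^sub>R ((t/s) *\<^sub>R y)" using y assms by simp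
  ultimately show "z \<in> (\<lambda>x. s *\<^sub>R x) ` K" by blast
qed

lemma sym_convex_body_cball_0:
  assumes "sym_convex_body K" obtains r where "r > 0" "cball 0 r \<subseteq> K"
proof -
  from assms obtain x where x: "x \<in> interior K" and "convex K" "uminus ` K = K"
    unfolding sym_convex_body_def by auto
  then have "-x \<in> interior K" using interior_negations[of K] by auto
  then have "(1/2) *\<^sub>R x + (1/2) *\<^sub>R (-x) \<in> interior K"
    using convexD[OF convex_interior[OF \<open>convex K\<close>] x, of "-x" "1/2" "1/2"] by simp
  then have "0 \<in> interior K" by simp
  then show ?thesis using that mem_interior_cball by blast
qed

lemma finite_subset_scaled_neighbourhood:
  fixes K L :: "'a::real_normed_vector set"
  assumes "0 < r" "cball 0 r \<subseteq> K" "finite S" "S \<subseteq> L" "subspace L"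
  obtains t where "t > 0" "S \<subseteq> (\<lambda>x. t *\<^sub>R x) ` (K \<inter> L)"
proof
  define t where "t = (sum norm S + 1) / r"
  show t: "t > 0" unfolding t_def using assms(1) sum_nonneg[of S norm] by auto
  show "S \<subseteq> (\<lambda>x. t *\<^sub>R x) ` (K \<inter> L)"
  proof
    fix s assume s: "s \<in> S"
    have "norm s \<le> sum norm S" using member_le_sum[of s S norm] s assms(3) by auto
    also have "\<dots> < r * t" unfolding t_def using assms(1) by simp
    finally have "norm s / t \<le> r" using t by (simp add: pos_divide_le_eq mult.commute)
    then have "(1/t) *\<^sub>R s \<in> K" using assms(2) t by auto
    moreover have "(1/t) *\<^sub>R s \<in> L" using s assms(4,5) by (auto intro: subspace_scale)
    moreover have "s = t *\<^sub>R ((1/t) *\<^sub>R s)" using t by simp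
    ultimately show "s \<in> (\<lambda>x. t *\<^sub>R x) ` (K \<inter> L)" by blast
  qed
qed

lemma card_le_aff_dim:
  fixes X :: "'a::euclidean_space set"
  assumes "0 \<in> X" "B \<subseteq> X" "independent B"
  shows "int (card B) \<le> aff_dim X"
  using dim_subset[OF assms(2)] dim_eq_card_independent[OF assms(3)]
    aff_dim_zero[of X] assms(1) by (simp add: hull_inc)

lemma dim_Int_plus_dim_le:
  fixes V W L :: "'a::euclidean_space set"
  assumes "subspace V" "subspace W" "subspace L" "W \<subseteq> V" "W \<inter> L = {0}"
  shows "dim (V \<inter> L) + dim W \<le> dim V"
proof -
  have "dim (V \<inter> L) + dim W = dim {x + y |x y. x \<in> V \<inter> L \<and> y \<in> W} + dim ((V \<inter> L) \<inter> W)"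
    using dim_sums_Int[OF subspace_inter[OF assms(1,3)] assms(2)] by simp
  also have "dim ((V \<inter> L) \<inter> W) = 0"
    using dim_subset[of "(V \<inter> L) \<inter> W" "{0}"] assms(5) by auto
  also have "{x + y |x y. x \<in> V \<inter> L \<and> y \<in> W} \<subseteq> V"
    using assms(1,4) subspace_add by blast
  then have "dim {x + y |x y. x \<in> V \<inter> L \<and> y \<in> W} \<le> dim V" by (rule dim_subset)
  finally show ?thesis by simp
qed

lemma succ_min_nonneg:
  assumes "\<exists>t>0. aff_dim (((\<lambda>x. t *\<^sub>R x) ` C) \<inter> Lam) \<ge> int j"
  shows "0 \<le> succ_min C Lam j"
  unfolding succ_min_def using assms by (intro cInf_greatest) auto

lemma succ_min_le:
  assumes "t > 0" "aff_dim (((\<lambda>x. t *\<^sub>R x) ` C) \<inter> Lam) \<ge> int j"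
  shows "succ_min C Lam j \<le> t"
  unfolding succ_min_def using assms
  by (intro cInf_lower) (auto simp: bdd_below_def intro!: exI[of _ 0])

lemma succ_min_mono:
  assumes "\<exists>t>0. aff_dim (((\<lambda>x. t *\<^sub>R x) ` C) \<inter> Lam) \<ge> int j'" "j \<le> j'"
  shows "succ_min C Lam j \<le> succ_min C Lam j'"
  unfolding succ_min_def using assms
  by (intro cInf_superset_mono) (auto simp: bdd_below_def intro!: exI[of _ 0])

lemma section_scale_exists:
  fixes K L :: "(real ^ 'n) set"
  assumes "sym_convex_body K" "subspace L" "0 \<in> Lam"
    and "S \<subseteq> Lam \<inter> L" "independent S" "j \<le> card S"
  shows "\<exists>t>0. aff_dim (((\<lambda>x. t *\<^sub>R x) ` (K \<inter> L)) \<inter> (Lam \<inter> L)) \<ge> int j"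
proof -
  obtain r where r: "r > 0" "cball 0 r \<subseteq> K" using sym_convex_body_cball_0[OF assms(1)] .
  obtain t where t: "t > 0" "S \<subseteq> (\<lambda>x. t *\<^sub>R x) ` (K \<inter> L)"
    using finite_subset_scaled_neighbourhood[OF r _ _ assms(2)] assms(4,5) independent_bound
    by (metis le_infE)
  have "0 \<in> ((\<lambda>x. t *\<^sub>R x) ` (K \<inter> L)) \<inter> (Lam \<inter> L)"
    using r assms(2,3) subspace_0 by (auto intro!: image_eqI[of 0 _ 0])
  with card_le_aff_dim[OF this _ assms(5)] t assms(4,6) show ?thesis by force
qed

locale minima_basis =
  fixes K Lam :: "(real ^ 'n) set" and a :: "nat \<Rightarrow> real ^ 'n"
  assumes body: "sym_convex_body K"
    and zero_in_Lam: "0 \<in> Lam"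
    and a_Lam: "a ` {1..CARD('n)} \<subseteq> Lam"
    and a_inj: "inj_on a {1..CARD('n)}"
    and a_indep: "independent (a ` {1..CARD('n)})"
    and a_min: "\<And>j. j \<in> {1..CARD('n)} \<Longrightarrow> a j \<in> (\<lambda>x. succ_min K Lam j *\<^sub>R x) ` K"
begin

lemma scale_exists:
  assumes "j \<le> CARD('n)"
  shows "\<exists>t>0. aff_dim (((\<lambda>x. t *\<^sub>R x) ` K) \<inter> Lam) \<ge> int j"
  using section_scale_exists[OF body subspace_UNIV zero_in_Lam _ a_indep, of j]
    a_Lam assms card_image[OF a_inj] by simp

lemma zero_in_K: "0 \<in> K"
  using sym_convex_body_cball_0[OF body] by (metis centre_in_cball less_le subsetD)

lemma minimum_nonneg: "j \<le> CARD('n) \<Longrightarrow> 0 \<le> succ_min K Lam j"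
  using succ_min_nonneg scale_exists by blast

lemma minimum_mono: "j \<le> j' \<Longrightarrow> j' \<le> CARD('n) \<Longrightarrow> succ_min K Lam j \<le> succ_min K Lam j'"
  using succ_min_mono scale_exists by blast

lemma a_in_scaled:
  assumes "j \<in> {1..CARD('n)}" "0 < \<mu>" "succ_min K Lam j \<le> \<mu>"
  shows "a j \<in> (\<lambda>x. \<mu> *\<^sub>R x) ` K"
proof -
  have "convex K" using body unfolding sym_convex_body_def by blast
  then show ?thesis
    using a_min[OF assms(1)] scaled_convex_mono[OF _ zero_in_K minimum_nonneg] assms by fastforce
qed

lemma dim_span_a:
  assumes "S \<subseteq> {1..CARD('n)}"
  shows "dim (span (a ` S)) = card S"
proof -
  have "independent (a ` S)" using independent_mono[OF a_indep] assms by blast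
  then have "dim (span (a ` S)) = card (a ` S)" by (rule dim_span_eq_card_independent)
  also have "\<dots> = card S" using card_image inj_on_subset[OF a_inj assms] by blast
  finally show ?thesis .
qed

lemma lattice_point_in_span_of_smaller_minima:
  assumes "0 < \<mu>" "x \<in> ((\<lambda>x. \<mu> *\<^sub>R x) ` K) \<inter> Lam"
  shows "x \<in> span (a ` {j \<in> {1..CARD('n)}. succ_min K Lam j \<le> \<mu>})"
proof (rule ccontr)
  define P where "P = {j \<in> {1..CARD('n)}. succ_min K Lam j \<le> \<mu>}"
  define B where "B = insert x (a ` P)"
  assume "x \<notin> span (a ` P)"
  moreover have "independent (a ` P)" by (rule independent_mono[OF a_indep]) (auto simp: P_def)
  ultimately have indB: "independent B" and "x \<notin> a ` P"
    unfolding B_def using independent_insertI span_base by blast+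
  moreover have "card (a ` P) = card P"
    by (rule card_image[OF inj_on_subset[OF a_inj]]) (auto simp: P_def)
  ultimately have cB: "card B = card P + 1" by (simp add: B_def P_def)
  have "card B \<le> CARD('n)" using independent_bound[OF indB] by simp
  define Y where "Y = ((\<lambda>x. \<mu> *\<^sub>R x) ` K) \<inter> Lam"
  have "0 \<in> Y" using zero_in_K zero_in_Lam unfolding Y_def by (auto intro!: image_eqI[of 0 _ 0])
  moreover have "B \<subseteq> Y" using assms a_in_scaled a_Lam by (auto simp: B_def Y_def P_def)
  ultimately have "int (card P + 1) \<le> aff_dim Y" using card_le_aff_dim indB cB by metis
  then have "succ_min K Lam (card P + 1) \<le> \<mu>" unfolding Y_def by (rule succ_min_le[OF assms(1)])
  have "{1..card P + 1} \<subseteq> P"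
  proof
    fix j assume "j \<in> {1..card P + 1}"
    moreover have "succ_min K Lam j \<le> succ_min K Lam (card P + 1)"
      using calculation minimum_mono \<open>card B \<le> CARD('n)\<close> cB by simp
    ultimately show "j \<in> P"
      using \<open>succ_min K Lam (card P + 1) \<le> \<mu>\<close> \<open>card B \<le> CARD('n)\<close> cB by (simp add: P_def)
  qed
  from card_mono[OF _ this] show False by (simp add: P_def)
qed

lemma lattice_points_in_span_of_prefix:
  assumes "0 < \<mu>" "\<mu> < succ_min K Lam k"
  shows "((\<lambda>x. \<mu> *\<^sub>R x) ` K) \<inter> Lam \<subseteq> span (a ` {1..<k})"
proof -
  have "{j \<in> {1..CARD('n)}. succ_min K Lam j \<le> \<mu>} \<subseteq> {1..<k}"
    using minimum_mono[of k] assms(2) by (force simp: not_less[symmetric])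
  then show ?thesis
    using lattice_point_in_span_of_smaller_minima[OF assms(1)] span_mono[OF image_mono] by blast
qed

lemma dim_prefix_section_le:
  assumes "subspace L" "J \<subseteq> {1..CARD('n)}" "span (a ` J) \<inter> L = {0}" "k \<le> Suc CARD('n)"
  shows "dim (span (a ` {1..<k}) \<inter> L) + card (J \<inter> {1..<k}) \<le> k - 1"
proof -
  have "span (a ` (J \<inter> {1..<k})) \<subseteq> span (a ` {1..<k})"
    by (intro span_mono image_mono) auto
  moreover have "span (a ` (J \<inter> {1..<k})) \<inter> L = {0}"
    using assms(3) span_mono[of "a ` (J \<inter> {1..<k})" "a ` J"] span_zero subspace_0[OF assms(1)]
    by blast
  ultimately have "dim (span (a ` {1..<k}) \<inter> L) + dim (span (a ` (J \<inter> {1..<k})))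
      \<le> dim (span (a ` {1..<k}))"
    using dim_Int_plus_dim_le subspace_span assms(1) by blast
  then show ?thesis using dim_span_a assms(2,4) by (simp add: subset_iff)
qed

lemma minimum_le_section_minimum:
  fixes L :: "(real ^ 'n) set" and J :: "nat set" and k :: nat
  defines "N \<equiv> {1..CARD('n)} - J"
  defines "l \<equiv> card {j \<in> N. j \<le> k}"
  assumes L: "subspace L" and J: "J \<subseteq> {1..CARD('n)}" "span (a ` J) \<inter> L = {0}"
    and k: "k \<in> N"
    and section_scale:
      "\<exists>t>0. aff_dim (((\<lambda>x. t *\<^sub>R x) ` (K \<inter> L)) \<inter> (Lam \<inter> L)) \<ge> int l"
  shows "succ_min K Lam k \<le> succ_min (K \<inter> L) (Lam \<inter> L) l"
  unfolding succ_min_def[of "K \<inter> L"]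
proof (rule cInf_greatest)
  fix \<mu> assume "\<mu> \<in> {t. 0 < t \<and> int l \<le> aff_dim ((\<lambda>x. t *\<^sub>R x) ` (K \<inter> L) \<inter> (Lam \<inter> L))}"
  then have \<mu>: "0 < \<mu>" and dim_X: "int l \<le> aff_dim ((\<lambda>x. \<mu> *\<^sub>R x) ` (K \<inter> L) \<inter> (Lam \<inter> L))"
    by auto
  define X where "X = (\<lambda>x. \<mu> *\<^sub>R x) ` (K \<inter> L) \<inter> (Lam \<inter> L)"
  have "{j \<in> N. j \<le> k} = insert k (N \<inter> {1..<k})" using k by (auto simp: N_def)
  then have l: "l = Suc (card (N \<inter> {1..<k}))" by (simp add: l_def N_def)
  moreover have "{1..<k} = (J \<inter> {1..<k}) \<union> (N \<inter> {1..<k})"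
    and "(J \<inter> {1..<k}) \<inter> (N \<inter> {1..<k}) = {}" using k by (auto simp: N_def)
  then have "card (J \<inter> {1..<k}) + card (N \<inter> {1..<k}) = k - 1"
    by (metis card_Un_disjoint card_atLeastLessThan finite_Int finite_atLeastLessThan)
  ultimately have dim_bound: "dim (span (a ` {1..<k}) \<inter> L) < l"
    using dim_prefix_section_le[OF L J, of k] k by (simp add: N_def)
  have "0 \<in> X"
    using zero_in_K zero_in_Lam subspace_0[OF L] unfolding X_def by (auto intro!: image_eqI[of 0 _ 0])
  then have "l \<le> dim X" using dim_X aff_dim_zero[of X] by (simp add: X_def hull_inc)
  show "succ_min K Lam k \<le> \<mu>"
  proof (rule ccontr)
    assume "\<not> succ_min K Lam k \<le> \<mu>"
    then have "(\<lambda>x. \<mu> *\<^sub>R x) ` K \<inter> Lam \<subseteq> span (a ` {1..<k})"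
      by (intro lattice_points_in_span_of_prefix[OF \<mu>]) simp
    moreover have "X \<subseteq> (\<lambda>x. \<mu> *\<^sub>R x) ` K \<inter> Lam" "X \<subseteq> L"
      unfolding X_def by (blast intro: image_mono)+
    ultimately have "dim X \<le> dim (span (a ` {1..<k}) \<inter> L)" by (intro dim_subset) blast
    with \<open>l \<le> dim X\<close> dim_bound show False by linarith
  qed
qed (use section_scale in auto)

end

lemma bij_betw_rank:
  fixes N :: "nat set"
  assumes "finite N"
  shows "bij_betw (\<lambda>k. card {j \<in> N. j \<le> k}) N {1..card N}"
proof -
  have "inj_on (\<lambda>k. card {j \<in> N. j \<le> k}) N"
  proof (rule linorder_inj_onI')
    fix k k' assume "k \<in> N" "k' \<in> N" "k < k'"
    then have "k' \<notin> {j \<in> N. j \<le> k}" "k' \<in> {j \<in> N. j \<le> k'}" "{j \<in> N. j \<le> k} \<subseteq> {j \<in> N. j \<le> k'}"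
      by auto
    then have "{j \<in> N. j \<le> k} \<subset> {j \<in> N. j \<le> k'}" by (metis psubsetI)
    then have "card {j \<in> N. j \<le> k} < card {j \<in> N. j \<le> k'}"
      by (rule psubset_card_mono[rotated]) (use assms in simp)
    then show "card {j \<in> N. j \<le> k} \<noteq> card {j \<in> N. j \<le> k'}" by simp
  qed
  moreover have "(\<lambda>k. card {j \<in> N. j \<le> k}) ` N \<subseteq> {1..card N}"
  proof (rule image_subsetI)
    fix k assume "k \<in> N"
    then have "0 < card {j \<in> N. j \<le> k}" using assms by (auto simp: card_gt_0_iff)
    moreover have "card {j \<in> N. j \<le> k} \<le> card N" using assms by (intro card_mono) auto
    ultimately show "card {j \<in> N. j \<le> k} \<in> {1..card N}" by simp
  qed
  ultimately have "(\<lambda>k. card {j \<in> N. j \<le> k}) ` N = {1..card N}"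
    by (intro card_subset_eq) (simp_all add: card_image)
  with \<open>inj_on _ N\<close> show ?thesis unfolding bij_betw_def by blast
qed

lemma prod_le_prod_rank:
  fixes f g :: "nat \<Rightarrow> 'a::linordered_semidom"
  assumes "finite N" "\<And>k. k \<in> N \<Longrightarrow> 0 \<le> f k \<and> f k \<le> g (card {j \<in> N. j \<le> k})"
  shows "prod f N \<le> prod g {1..card N}"
  using prod_mono[of N f "\<lambda>k. g (card {j \<in> N. j \<le> k})"] assms
    prod.reindex_bij_betw[OF bij_betw_rank[OF assms(1)], of g] by simp

theorem lemma2p3:
  fixes K L :: "(real ^ 'n) set" and a :: "nat \<Rightarrow> real ^ 'n"
    and i :: nat and J :: "nat set"
  assumes K: "sym_convex_body K"
    and a_int: "\<forall>j\<in>{1..CARD('n)}. a j \<in> int_lattice"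
    and a_inj: "inj_on a {1..CARD('n)}"
    and a_indep: "independent (a ` {1..CARD('n)})"
    and a_min: "\<forall>j\<in>{1..CARD('n)}. a j \<in> (\<lambda>x. succ_min K int_lattice j *\<^sub>R x) ` K"
    and i: "1 \<le> i" "i \<le> CARD('n) - 1"
    and L: "subspace L" "dim L = i"
    and L_lat: "\<exists>S. S \<subseteq> int_lattice \<inter> L \<and> independent S \<and> card S = i"
    and J: "J \<subseteq> {1..CARD('n)}" "card J = CARD('n) - i"
    and J_L: "span (a ` J) \<inter> L = {0}"
  shows "(\<Prod>j=1..i. succ_min (K \<inter> L) (int_lattice \<inter> L) j)
           \<ge> (\<Prod>k\<in>{1..CARD('n)} - J. succ_min K int_lattice k)"
proof -
  interpret minima_basis K int_lattice a
    using K a_int a_inj a_indep a_min by unfold_locales auto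
  define N where "N = {1..CARD('n)} - J"
  have "finite N" by (simp add: N_def)
  have card_N: "card N = i"
    using card_Diff_subset[OF finite_subset[OF J(1)] J(1)] J(2) i by (simp add: N_def)
  obtain S where S: "S \<subseteq> int_lattice \<inter> L" "independent S" "card S = i" using L_lat by blast
  have "succ_min K int_lattice k \<le> succ_min (K \<inter> L) (int_lattice \<inter> L) (card {j \<in> N. j \<le> k})"
    if "k \<in> N" for k
  proof -
    have "card {j \<in> N. j \<le> k} \<le> i" using card_mono[OF \<open>finite N\<close>] card_N by fastforce
    then show ?thesis
      using minimum_le_section_minimum[OF L(1) J(1) J_L] that
        section_scale_exists[OF K L(1) zero_in_int_lattice S(1,2)] S(3)
      unfolding N_def by auto
  qed
  then have "(\<Prod>k\<in>N. succ_min K int_lattice k) \<le> (\<Prod>l=1..card N. succ_min (K \<inter> L) (int_lattice \<inter> L) l)"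
    using minimum_nonneg by (intro prod_le_prod_rank[OF \<open>finite N\<close>]) (auto simp: N_def)
  then show ?thesis unfolding card_N by (simp add: N_def)
qed

end
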